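(* Let $\mathbb{V}$ be a finite vocabulary, $\theta$ a language model, $k\ge 1$, $B\ge 1$, $T\ge 1$, a prefix $\mathbf{z}_{\mathrm{pre}}$ and a target suffix $\mathbf{z}_{\mathrm{suf}}\in\mathbb{V}^T$, as described in the context. Run top-$k$ constrained beam search ($k$-CBS) with beam width $B$, and let $C_T$ be its final candidate set. Let $F_{(B)}\subseteq C_T$ consist of the (at most) $B$ pairs of $C_T$ with the largest second coordinate (ties broken by a fixed deterministic rule). For $\mathsf{dist}\in\{\mathsf{Hamming},\mathsf{Levenshtein}\}$ and $\varepsilon\ge 0$ define $$\mathrm{LB}^{(B)}_{\varepsilon,\mathsf{dist}}=\sum_{(\mathbf{z}_{\mathrm{pre}}\Vert\mathbf{x},\,\ell)\in F_{(B)}\,:\,\mathbf{x}\in\mathbb{B}^{\mathsf{dist}}_{\varepsilon}(\mathbf{z}_{\mathrm{suf}})}\exp(\ell).$$ Then $\mathrm{LB}^{(B)}_{\varepsilon,\mathsf{dist}}\le p^{\mathsf{dist}}_{\mathbf{z},\varepsilon}$.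
   Context: Let $\mathbb{V}$ be a finite vocabulary containing a designated end-of-sequence token EOS. A language model $\theta$ assigns to every finite token sequence (history) $\mathbf{h}$ a probability distribution $\Pr_\theta(\cdot\mid\mathbf{h})$ on $\mathbb{V}$ with $\Pr_\theta(v\mid\mathbf{h})>0$ for all $v$. For an integer $k\ge1$ and a history $\mathbf{h}$, let $S(\mathbf{h})\subseteq\mathbb{V}$ be the set of $k$ tokens with the largest values of $\Pr_\theta(\cdot\mid\mathbf{h})$ (ties broken by a fixed deterministic rule). The top-$k$ decoding distribution is $\Pr_{\theta,\phi}(v\mid\mathbf{h})=\Pr_\theta(v\mid\mathbf{h})/\sum_{u\in S(\mathbf{h})}\Pr_\theta(u\mid\mathbf{h})$ for $v\in S(\mathbf{h})$ and $0$ otherwise. Fix a prefix $\mathbf{z}_{\mathrm{pre}}\in\mathbb{V}^L$ and a target suffix $\mathbf{z}_{\mathrm{suf}}\in\mathbb{V}^T$. For $\mathbf{x}\in\mathbb{V}^T$, $\Pr_{\theta,\phi}(\mathbf{x}\mid\mathbf{z}_{\mathrm{pre}})=\prod_{t=1}^T\Pr_{\theta,\phi}(x_t\mid\mathbf{z}_{\mathrm{pre}}\Vert x_{1:t-1})$ ($\Vert$ is concatenation). For $\mathbf{b},\mathbf{c}\in\mathbb{V}^T$, $\mathsf{Hamming}(\mathbf{b},\mathbf{c})=\#\{t: b_t\ne c_t\}$ and $\mathsf{Levenshtein}(\mathbf{b},\mathbf{c})$ is the minimum number of unit-cost single-token substitutions, insertions and deletions transforming $\mathbf{b}$ into $\mathbf{c}$.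 The $\varepsilon$-ball is $\mathbb{B}^{\mathsf{dist}}_{\varepsilon}(\mathbf{z}_{\mathrm{suf}})=\{\mathbf{v}\in\mathbb{V}^T:\mathsf{dist}(\mathbf{v},\mathbf{z}_{\mathrm{suf}})\le\varepsilon\}$, and the near-verbatim extraction probability is $p^{\mathsf{dist}}_{\mathbf{z},\varepsilon}=\sum_{\mathbf{v}\in\mathbb{B}^{\mathsf{dist}}_{\varepsilon}(\mathbf{z}_{\mathrm{suf}})}\Pr_{\theta,\phi}(\mathbf{v}\mid\mathbf{z}_{\mathrm{pre}})$. Top-$k$ constrained beam search ($k$-CBS) with beam width $B$: set $L_0=\{(\mathbf{z}_{\mathrm{pre}},0)\}$. For $t=1,\dots,T$: let $C_t=\{(\mathbf{h}\Vert v,\ \ell+\log\Pr_{\theta,\phi}(v\mid\mathbf{h})):(\mathbf{h},\ell)\in L_{t-1},\ v\in S(\mathbf{h})\}$. If $t=T$, output $F=C_T$. If $t<T$, delete from $C_t$ every pair whose history ends in EOS, and let $L_t$ be the (at most) $B$ pairs of $C_t$ with the largest second coordinate (deterministic tie-breaking). Every pair in $C_T$ has the form $(\mathbf{z}_{\mathrm{pre}}\Vert\mathbf{x},\ell)$ with $\mathbf{x}\in\mathbb{V}^T$. *)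

theory Defs
  imports Complex_Main
begin

definition is_lm :: "('v::finite list \<Rightarrow> 'v \<Rightarrow> real) \<Rightarrow> bool" where
  "is_lm \<theta> \<longleftrightarrow> (\<forall>h v. \<theta> h v > 0) \<and> (\<forall>h. (\<Sum>v\<in>UNIV. \<theta> h v) = 1)"

text \<open>S is a top-k selection rule (deterministic, being a function): for every history,
  S h consists of k tokens (all of them if fewer exist) of largest probability.\<close>
definition is_topk_rule :: "('v::finite list \<Rightarrow> 'v \<Rightarrow> real) \<Rightarrow> nat \<Rightarrow> ('v list \<Rightarrow> 'v set) \<Rightarrow> bool" where
  "is_topk_rule \<theta> k S \<longleftrightarrow>
     (\<forall>h. card (S h) = min k (card (UNIV :: 'v set)) \<and>
          (\<forall>v\<in>S h. \<forall>u. u \<notin> S h \<longrightarrow> \<theta> h u \<le> \<theta> h v))"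

definition is_topB_rule :: "nat \<Rightarrow> (('v list \<times> real) set \<Rightarrow> ('v list \<times> real) set) \<Rightarrow> bool" where
  "is_topB_rule B sel \<longleftrightarrow>
     (\<forall>C. finite C \<longrightarrow> sel C \<subseteq> C \<and> card (sel C) = min B (card C) \<and>
          (\<forall>p\<in>sel C. \<forall>q\<in>C - sel C. snd q \<le> snd p))"

definition topk_prob :: "('v list \<Rightarrow> 'v \<Rightarrow> real) \<Rightarrow> ('v list \<Rightarrow> 'v set) \<Rightarrow> 'v list \<Rightarrow> 'v \<Rightarrow> real" where
  "topk_prob \<theta> S h v = (if v \<in> S h then \<theta> h v / (\<Sum>u\<in>S h. \<theta> h u) else 0)"

definition seq_prob :: "('v list \<Rightarrow> 'v \<Rightarrow> real) \<Rightarrow> ('v list \<Rightarrow> 'v set) \<Rightarrow> 'v list \<Rightarrow> 'v list \<Rightarrow> real" where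
  "seq_prob \<theta> S zpre x = (\<Prod>t<length x. topk_prob \<theta> S (zpre @ take t x) (x ! t))"

definition cands :: "('v list \<Rightarrow> 'v \<Rightarrow> real) \<Rightarrow> ('v list \<Rightarrow> 'v set) \<Rightarrow> ('v list \<times> real) set \<Rightarrow> ('v list \<times> real) set" where
  "cands \<theta> S L = {(h @ [v], l + ln (topk_prob \<theta> S h v)) | h l v. (h, l) \<in> L \<and> v \<in> S h}"

text \<open>beam ... t = L_t (for t < T).\<close>
fun beam :: "('v list \<Rightarrow> 'v \<Rightarrow> real) \<Rightarrow> ('v list \<Rightarrow> 'v set) \<Rightarrow> 'v \<Rightarrow>
    (('v list \<times> real) set \<Rightarrow> ('v list \<times> real) set) \<Rightarrow> 'v list \<Rightarrow> nat \<Rightarrow> ('v list \<times> real) set" where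
  "beam \<theta> S eos sel zpre 0 = {(zpre, 0)}"
| "beam \<theta> S eos sel zpre (Suc t) =
     sel {p \<in> cands \<theta> S (beam \<theta> S eos sel zpre t). last (fst p) \<noteq> eos}"

text \<open>Final candidate set C_T (T \<ge> 1).\<close>
definition final_cands where
  "final_cands \<theta> S eos sel zpre T = cands \<theta> S (beam \<theta> S eos sel zpre (T - 1))"

definition hamming :: "'a list \<Rightarrow> 'a list \<Rightarrow> nat" where
  "hamming b c = card {t. t < length b \<and> b ! t \<noteq> c ! t}"

definition edit1 :: "'a list \<Rightarrow> 'a list \<Rightarrow> bool" where
  "edit1 b c \<longleftrightarrow> (\<exists>u w x y.
      (b = u @ [x] @ w \<and> c = u @ [y] @ w) \<or>
      (b = u @ w \<and> c = u @ [y] @ w) \<or>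
      (b = u @ [x] @ w \<and> c = u @ w))"

definition levenshtein :: "'a list \<Rightarrow> 'a list \<Rightarrow> nat" where
  "levenshtein b c = (LEAST n. (edit1 ^^ n) b c)"

definition extraction_prob where
  "extraction_prob \<theta> S zpre zsuf dst \<epsilon> =
     (\<Sum>v\<in>{v. length v = length zsuf \<and> real (dst v zsuf) \<le> \<epsilon>}. seq_prob \<theta> S zpre v)"

definition beam_LB where
  "beam_LB F zpre zsuf dst \<epsilon> =
     (\<Sum>p\<in>{p\<in>F. \<exists>x. fst p = zpre @ x \<and> length x = length zsuf \<and> real (dst x zsuf) \<le> \<epsilon>}. exp (snd p))"

end

theory Submission
  imports Defs
begin

text \<open>Scores accumulate the logarithms of the factors of the product defining the sequence
  probability, so every pair carried by the beam is (zpre @ x, ln Pr(x)) with Pr(x) > 0.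
  Distinct pairs therefore belong to distinct continuations x, and the lower bound is the sum of
  Pr(x) over a subset of the ball, which is dominated by the sum over the whole ball.
  Neither the top-k property of S, the beam width nor the choice of distance plays a role.\<close>

definition scored_paths ::
    "('v list \<Rightarrow> 'v \<Rightarrow> real) \<Rightarrow> ('v list \<Rightarrow> 'v set) \<Rightarrow> 'v list \<Rightarrow> nat \<Rightarrow> ('v list \<times> real) set" where
  "scored_paths \<theta> S zpre t =
     (\<lambda>x. (zpre @ x, ln (seq_prob \<theta> S zpre x))) ` {x. length x = t \<and> seq_prob \<theta> S zpre x > 0}"

lemma seq_prob_snoc:
  "seq_prob \<theta> S zpre (x @ [v]) = seq_prob \<theta> S zpre x * topk_prob \<theta> S (zpre @ x) v"
proof -
  have "(\<Prod>t<length x. topk_prob \<theta> S (zpre @ take t (x @ [v])) ((x @ [v]) ! t))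
        = seq_prob \<theta> S zpre x"
    unfolding seq_prob_def by (rule prod.cong) (auto simp: nth_append)
  then show ?thesis
    unfolding seq_prob_def by (simp add: prod.lessThan_Suc)
qed

lemma topk_prob_nonneg:
  assumes "is_lm \<theta>"
  shows "topk_prob \<theta> S h v \<ge> 0"
  using assms by (auto simp: topk_prob_def is_lm_def less_imp_le intro!: divide_nonneg_nonneg sum_nonneg)

lemma topk_prob_pos:
  assumes "is_lm \<theta>" and "v \<in> S h"
  shows "topk_prob \<theta> S h v > 0"
proof -
  have "finite (S h)" "S h \<noteq> {}"
    using \<open>v \<in> S h\<close> by auto
  then have "(\<Sum>u\<in>S h. \<theta> h u) > 0"
    using assms(1) by (intro sum_pos) (auto simp: is_lm_def)
  then show ?thesis
    using assms by (auto simp: topk_prob_def is_lm_def)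
qed

lemma seq_prob_nonneg:
  assumes "is_lm \<theta>"
  shows "seq_prob \<theta> S zpre x \<ge> 0"
  unfolding seq_prob_def using topk_prob_nonneg[OF assms] by (simp add: prod_nonneg)

lemma finite_scored_paths: "finite (scored_paths \<theta> S zpre t)"
  for zpre :: "'v::finite list"
proof -
  have "finite {x :: 'v list. length x = t}"
    using finite_lists_length_eq[OF finite_UNIV[where 'a='v]] by simp
  then show ?thesis
    unfolding scored_paths_def by (auto intro: finite_subset[rotated])
qed

lemma cands_subset_scored_paths:
  assumes "is_lm \<theta>" and "L \<subseteq> scored_paths \<theta> S zpre t"
  shows "cands \<theta> S L \<subseteq> scored_paths \<theta> S zpre (Suc t)"
proof
  fix p assume "p \<in> cands \<theta> S L"
  then obtain h l v where p: "p = (h @ [v], l + ln (topk_prob \<theta> S h v))"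
    and "(h, l) \<in> L" and "v \<in> S h"
    unfolding cands_def by blast
  then obtain x where x: "h = zpre @ x" "l = ln (seq_prob \<theta> S zpre x)" "length x = t"
    and x_pos: "seq_prob \<theta> S zpre x > 0"
    using assms(2) unfolding scored_paths_def by auto
  have v_pos: "topk_prob \<theta> S h v > 0"
    using topk_prob_pos assms(1) \<open>v \<in> S h\<close> by blast
  have snoc: "seq_prob \<theta> S zpre (x @ [v]) = seq_prob \<theta> S zpre x * topk_prob \<theta> S h v"
    using seq_prob_snoc x(1) by metis
  have "p = (zpre @ (x @ [v]), ln (seq_prob \<theta> S zpre (x @ [v])))"
    using p x x_pos v_pos snoc by (simp add: ln_mult)
  moreover have "seq_prob \<theta> S zpre (x @ [v]) > 0"
    using snoc x_pos v_pos by simp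
  ultimately show "p \<in> scored_paths \<theta> S zpre (Suc t)"
    unfolding scored_paths_def using x(3) by auto
qed

lemma topB_rule_subset:
  assumes "is_topB_rule B sel" and "finite C"
  shows "sel C \<subseteq> C"
  using assms by (simp add: is_topB_rule_def)

lemma beam_subset_scored_paths:
  assumes "is_lm \<theta>" and "is_topB_rule B sel"
  shows "beam \<theta> S eos sel zpre t \<subseteq> scored_paths \<theta> S zpre t"
proof (induction t)
  case 0
  have "seq_prob \<theta> S zpre [] = 1"
    by (simp add: seq_prob_def)
  then show ?case
    by (auto simp: scored_paths_def)
next
  case (Suc t)
  let ?C = "{p \<in> cands \<theta> S (beam \<theta> S eos sel zpre t). last (fst p) \<noteq> eos}"
  have C: "?C \<subseteq> scored_paths \<theta> S zpre (Suc t)"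
    using cands_subset_scored_paths[OF assms(1) Suc.IH] by auto
  then have "finite ?C"
    using finite_scored_paths finite_subset by blast
  with C show ?case
    using topB_rule_subset[OF assms(2)] by fastforce
qed

lemma final_cands_subset_scored_paths:
  assumes "is_lm \<theta>" and "is_topB_rule B sel" and "T \<ge> 1"
  shows "final_cands \<theta> S eos sel zpre T \<subseteq> scored_paths \<theta> S zpre T"
proof -
  have "cands \<theta> S (beam \<theta> S eos sel zpre (T - 1)) \<subseteq> scored_paths \<theta> S zpre (Suc (T - 1))"
    by (rule cands_subset_scored_paths[OF assms(1) beam_subset_scored_paths[OF assms(1,2)]])
  then show ?thesis
    using assms(3) by (simp add: final_cands_def)
qed

lemma sum_exp_scores_le_seq_prob:
  assumes "is_lm \<theta>" and "F \<subseteq> scored_paths \<theta> S zpre t" and "finite A"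
  shows "(\<Sum>p\<in>{p\<in>F. \<exists>x\<in>A. fst p = zpre @ x}. exp (snd p)) \<le> (\<Sum>x\<in>A. seq_prob \<theta> S zpre x)"
proof -
  define scored where "scored x = (zpre @ x, ln (seq_prob \<theta> S zpre x))" for x
  define X where "X = {x\<in>A. scored x \<in> F \<and> seq_prob \<theta> S zpre x > 0}"
  have F_scored: "\<exists>y. p = scored y \<and> seq_prob \<theta> S zpre y > 0" if "p \<in> F" for p
    using that assms(2) unfolding scored_paths_def scored_def by auto
  have image: "{p\<in>F. \<exists>x\<in>A. fst p = zpre @ x} = scored ` X"
    using F_scored by (fastforce simp: X_def scored_def)
  have "inj scored"
    by (simp add: inj_def scored_def)
  then have "(\<Sum>p\<in>{p\<in>F. \<exists>x\<in>A. fst p = zpre @ x}. exp (snd p)) = (\<Sum>x\<in>X. exp (snd (scored x)))"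
    unfolding image by (simp add: sum.reindex inj_on_subset)
  also have "\<dots> = (\<Sum>x\<in>X. seq_prob \<theta> S zpre x)"
    by (rule sum.cong) (auto simp: X_def scored_def)
  also have "\<dots> \<le> (\<Sum>x\<in>A. seq_prob \<theta> S zpre x)"
    by (rule sum_mono2) (auto simp: X_def assms(3) seq_prob_nonneg[OF assms(1)])
  finally show ?thesis .
qed

theorem theorem2:
  fixes \<theta> :: "'v::finite list \<Rightarrow> 'v \<Rightarrow> real"
    and S :: "'v list \<Rightarrow> 'v set"
    and sel :: "('v list \<times> real) set \<Rightarrow> ('v list \<times> real) set"
    and eos :: 'v and k B T :: nat and zpre zsuf :: "'v list"
    and dst :: "'v list \<Rightarrow> 'v list \<Rightarrow> nat" and \<epsilon> :: real
  assumes "is_lm \<theta>"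
    and "k \<ge> 1" and "B \<ge> 1" and "T \<ge> 1"
    and "is_topk_rule \<theta> k S"
    and "is_topB_rule B sel"
    and "length zsuf = T"
    and "dst \<in> {hamming, levenshtein}"
    and "\<epsilon> \<ge> 0"
  shows "beam_LB (sel (final_cands \<theta> S eos sel zpre T)) zpre zsuf dst \<epsilon>
           \<le> extraction_prob \<theta> S zpre zsuf dst \<epsilon>"
proof -
  let ?C = "final_cands \<theta> S eos sel zpre T"
  define ball where "ball = {v. length v = length zsuf \<and> real (dst v zsuf) \<le> \<epsilon>}"
  have C: "?C \<subseteq> scored_paths \<theta> S zpre T"
    by (rule final_cands_subset_scored_paths[OF assms(1,6,4)])
  then have "finite ?C"
    using finite_scored_paths by (rule finite_subset)
  then have "sel ?C \<subseteq> scored_paths \<theta> S zpre T"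
    using topB_rule_subset[OF assms(6)] C by blast
  moreover have "finite ball"
    using finite_lists_length_eq[OF finite_UNIV[where 'a='v], of "length zsuf"]
    unfolding ball_def by (rule finite_subset[rotated]) blast
  ultimately have "(\<Sum>p\<in>{p\<in>sel ?C. \<exists>x\<in>ball. fst p = zpre @ x}. exp (snd p))
                   \<le> (\<Sum>x\<in>ball. seq_prob \<theta> S zpre x)"
    by (rule sum_exp_scores_le_seq_prob[OF assms(1)])
  moreover have "{p\<in>sel ?C. \<exists>x\<in>ball. fst p = zpre @ x}
      = {p\<in>sel ?C. \<exists>x. fst p = zpre @ x \<and> length x = length zsuf \<and> real (dst x zsuf) \<le> \<epsilon>}"
    unfolding ball_def by blast
  ultimately show ?thesis
    unfolding beam_LB_def extraction_prob_def ball_def by simp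
qed

end
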